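(* Let $n_1,n_2,n_3$ be integers with $3\le n_1,n_2\le n_3$, let $W$ be a basic landmark system for $K(\mathbf{n})$, and let $u=(n_1+1,n_2+1,n_3+1)$. Then $W\cup\{u\}$ is a resolving set of $K(\mathbf{n}+\mathbf{1})=K_{n_1+1}\times K_{n_2+1}\times K_{n_3+1}$ if and only if the landmark graph $\mathcal{G}(W)$ contains no bad $4$-cycle, no plain hex, and no rainbow $2$-$2$-triangle.
   Context: $K(\mathbf{n})=K_{n_1}\times K_{n_2}\times K_{n_3}$ is the direct product of complete graphs: vertices are triples $(x_1,x_2,x_3)$, $1\le x_i\le n_i$, adjacent iff they differ in every coordinate. A set $W$ of vertices is resolving if for every two distinct vertices $x,y\notin W$ some $w\in W$ has $d(x,w)\neq d(y,w)$ ($d$ = graph distance). Landmark graph: $W_{i,a}=\{w\in W: w_i=a\}$; $\mathcal{G}(W)$ is the hypergraph on $W$ whose hyperedges are the nonempty $W_{i,a}$, each colored $i$. A stick is a hyperedge with exactly two vertices, poofy if at least three. Basic landmark system for $K(\mathbf{n})$: a vertex set $W$ such that (1) $W_{i,a}\neq\emptyset$ for all $i\in\{1,2,3\}$, $1\le a\le n_i$; (2) $|W_{i,a}|\ge 2$ for all such $i,a$; (3) $|W_{i,a}\cap W_{j,b}|\le 1$ whenever $i\ne j$. Bad $4$-cycle: distinct $w_1,\dots,w_4\in W$ and $\{i,j,k\}=\{1,2,3\}$ such that $\{w_1,w_2\}$, $\{w_3,w_4\}$ are hyperedges of color $i$, $w_2,w_3$ lie in a common hyperedge of color $j$, and $w_4,w_1$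 lie in a common hyperedge of color $k$. Plain hex: distinct $w_1,\dots,w_6\in W$ and an ordering $(i,j,k)$ of $\{1,2,3\}$ with $\{w_1,w_2\},\{w_4,w_5\}$ hyperedges of color $i$, $\{w_2,w_3\},\{w_5,w_6\}$ of color $j$, $\{w_3,w_4\},\{w_6,w_1\}$ of color $k$. Rainbow $2$-$2$-triangle: distinct $w_1,w_2,w_3\in W$ and $\{i,j,k\}=\{1,2,3\}$ with $\{w_1,w_2\}$ a hyperedge of color $i$, $\{w_2,w_3\}$ a hyperedge of color $j$, and $w_1,w_3$ in a common hyperedge of color $k$. *)

theory Defs
  imports Main "HOL-Library.Extended_Nat"
begin

type_synonym vtx = "nat \<times> nat \<times> nat"

definition coord :: "nat \<Rightarrow> vtx \<Rightarrow> nat" where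
  "coord i x = (case x of (x1, x2, x3) \<Rightarrow> if i = 1 then x1 else if i = 2 then x2 else x3)"

definition Kverts :: "nat \<Rightarrow> nat \<Rightarrow> nat \<Rightarrow> vtx set" where
  "Kverts n1 n2 n3 = {(x1, x2, x3). 1 \<le> x1 \<and> x1 \<le> n1 \<and> 1 \<le> x2 \<and> x2 \<le> n2 \<and> 1 \<le> x3 \<and> x3 \<le> n3}"

text \<open>Adjacency in the direct product of complete graphs: differ in every coordinate.\<close>
definition Kadj :: "vtx \<Rightarrow> vtx \<Rightarrow> bool" where
  "Kadj x y \<longleftrightarrow> (\<forall>i\<in>{1,2,3::nat}. coord i x \<noteq> coord i y)"

inductive walk :: "'a set \<Rightarrow> ('a \<Rightarrow> 'a \<Rightarrow> bool) \<Rightarrow> nat \<Rightarrow> 'a \<Rightarrow> 'a \<Rightarrow> bool"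
  for V adj where
  walk0: "x \<in> V \<Longrightarrow> walk V adj 0 x x"
| walkS: "x \<in> V \<Longrightarrow> adj x y \<Longrightarrow> walk V adj k y z \<Longrightarrow> walk V adj (Suc k) x z"

text \<open>Graph distance (infinite if no walk exists).\<close>
definition gdist :: "'a set \<Rightarrow> ('a \<Rightarrow> 'a \<Rightarrow> bool) \<Rightarrow> 'a \<Rightarrow> 'a \<Rightarrow> enat" where
  "gdist V adj x y = Inf {enat k | k. walk V adj k x y}"

definition resolving :: "'a set \<Rightarrow> ('a \<Rightarrow> 'a \<Rightarrow> bool) \<Rightarrow> 'a set \<Rightarrow> bool" where
  "resolving V adj W \<longleftrightarrow> W \<subseteq> V \<and>
     (\<forall>x\<in>V - W. \<forall>y\<in>V - W. x \<noteq> y \<longrightarrow> (\<exists>w\<in>W. gdist V adj x w \<noteq> gdist V adj y w))"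

definition Wset :: "vtx set \<Rightarrow> nat \<Rightarrow> nat \<Rightarrow> vtx set" where
  "Wset W i a = {w \<in> W. coord i w = a}"

definition hyperedge :: "vtx set \<Rightarrow> nat \<Rightarrow> vtx set \<Rightarrow> bool" where
  "hyperedge W i e \<longleftrightarrow> i \<in> {1,2,3} \<and> (\<exists>a. e = Wset W i a \<and> e \<noteq> {})"

definition common :: "vtx set \<Rightarrow> nat \<Rightarrow> vtx \<Rightarrow> vtx \<Rightarrow> bool" where
  "common W i w v \<longleftrightarrow> (\<exists>e. hyperedge W i e \<and> w \<in> e \<and> v \<in> e)"

definition basic_landmark :: "nat \<Rightarrow> nat \<Rightarrow> nat \<Rightarrow> vtx set \<Rightarrow> bool" where
  "basic_landmark n1 n2 n3 W \<longleftrightarrow> W \<subseteq> Kverts n1 n2 n3 \<and>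
     (\<forall>i\<in>{1,2,3}. \<forall>a. 1 \<le> a \<and> a \<le> coord i (n1, n2, n3) \<longrightarrow> Wset W i a \<noteq> {}) \<and>
     (\<forall>i\<in>{1,2,3}. \<forall>a. 1 \<le> a \<and> a \<le> coord i (n1, n2, n3) \<longrightarrow> card (Wset W i a) \<ge> 2) \<and>
     (\<forall>i\<in>{1,2,3}. \<forall>j\<in>{1,2,3}. \<forall>a b. i \<noteq> j \<longrightarrow> card (Wset W i a \<inter> Wset W j b) \<le> 1)"

definition has_bad_4cycle :: "vtx set \<Rightarrow> bool" where
  "has_bad_4cycle W \<longleftrightarrow> (\<exists>w1 w2 w3 w4 i j k.
     w1 \<in> W \<and> w2 \<in> W \<and> w3 \<in> W \<and> w4 \<in> W \<and> distinct [w1, w2, w3, w4] \<and>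
     {i, j, k} = {1, 2, 3} \<and>
     hyperedge W i {w1, w2} \<and> hyperedge W i {w3, w4} \<and>
     common W j w2 w3 \<and> common W k w4 w1)"

definition has_plain_hex :: "vtx set \<Rightarrow> bool" where
  "has_plain_hex W \<longleftrightarrow> (\<exists>w1 w2 w3 w4 w5 w6 i j k.
     w1 \<in> W \<and> w2 \<in> W \<and> w3 \<in> W \<and> w4 \<in> W \<and> w5 \<in> W \<and> w6 \<in> W \<and>
     distinct [w1, w2, w3, w4, w5, w6] \<and>
     {i, j, k} = {1, 2, 3} \<and>
     hyperedge W i {w1, w2} \<and> hyperedge W i {w4, w5} \<and>
     hyperedge W j {w2, w3} \<and> hyperedge W j {w5, w6} \<and>
     hyperedge W k {w3, w4} \<and> hyperedge W k {w6, w1})"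

definition has_rainbow_triangle :: "vtx set \<Rightarrow> bool" where
  "has_rainbow_triangle W \<longleftrightarrow> (\<exists>w1 w2 w3 i j k.
     w1 \<in> W \<and> w2 \<in> W \<and> w3 \<in> W \<and> distinct [w1, w2, w3] \<and>
     {i, j, k} = {1, 2, 3} \<and>
     hyperedge W i {w1, w2} \<and> hyperedge W j {w2, w3} \<and> common W k w1 w3)"

end

theory Submission
  imports Defs
begin

(* Since every n_i + 1 >= 3, the graph K(n + 1) has diameter two: distinct vertices are adjacent
   iff they differ in every coordinate and at distance 2 otherwise.  So W + u resolves K(n + 1)
   iff no two distinct vertices x, y outside W + u share a coordinate with exactly the same
   landmarks.  Given such a pair and a coordinate l with x_l <> y_l and x_l <= n_l, every landmark
   of W_{l,x_l} shares a coordinate with x, hence with y, necessarily its j- or k-coordinate; as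
   condition (3) allows at most one landmark of W_{l,x_l} on each of these two lines,
   W_{l,x_l} is a stick {p, q} with p_j = y_j and q_k = y_k.  Chaining such sticks yields a bad
   4-cycle, a rainbow 2-2-triangle or a plain hex according as x and y differ in one, two or
   three coordinates; in the first case it is the landmark u that forces y_l <= n_l.
   Conversely, each of the three configurations yields an explicit unresolved pair. *)

lemma coord_simps [simp]:
  "coord 1 (a, b, c) = a" "coord (Suc 0) (a, b, c) = a" "coord 2 (a, b, c) = b" "coord 3 (a, b, c) = c"
  by (simp_all add: coord_def)

lemma coord_plus1: "coord t (a + 1, b + 1, c + 1) = coord t (a, b, c) + 1"
  by (simp add: coord_def)

lemma vtx_eq_iff_coord: "(x::vtx) = y \<longleftrightarrow> (\<forall>t\<in>{1,2,3}. coord t x = coord t y)"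
  by (cases x; cases y) (auto simp: coord_def)

lemma Kverts_iff:
  "x \<in> Kverts m1 m2 m3 \<longleftrightarrow> (\<forall>t\<in>{1,2,3}. 1 \<le> coord t x \<and> coord t x \<le> coord t (m1, m2, m3))"
  by (cases x) (auto simp: Kverts_def coord_def)

lemma perm3D:
  assumes "{i, j, k} = {1::nat, 2, 3}"
  shows "i \<in> {1,2,3}" "j \<in> {1,2,3}" "k \<in> {1,2,3}" "i \<noteq> j" "i \<noteq> k" "j \<noteq> k"
proof -
  have "card {i, j, k} = 3" using assms by simp
  then show "i \<noteq> j" "i \<noteq> k" "j \<noteq> k" by (auto simp: card_insert_if split: if_splits)
  show "i \<in> {1,2,3}" "j \<in> {1,2,3}" "k \<in> {1,2,3}" using assms by blast+
qed

lemma perm3_commute: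
  assumes "{i, j, k} = {1::nat, 2, 3}"
  shows "{i, k, j} = {1, 2, 3}" "{j, i, k} = {1, 2, 3}" "{k, j, i} = {1, 2, 3}"
  using assms by (auto simp: insert_commute)

lemma perm3_exists: "l \<in> {1, 2, 3::nat} \<Longrightarrow> \<exists>j k. {l, j, k} = {1, 2, 3}"
  by (auto simp: insert_commute)

lemma perm3_Ball_Bex:
  assumes "{i, j, k} = {1::nat, 2, 3}"
  shows "(\<forall>t\<in>{1,2,3}. P t) \<longleftrightarrow> P i \<and> P j \<and> P k"
    and "(\<exists>t\<in>{1,2,3}. P t) \<longleftrightarrow> P i \<or> P j \<or> P k"
  by (simp_all only: assms[symmetric]) auto

definition vtx_of :: "nat \<Rightarrow> nat \<Rightarrow> nat \<Rightarrow> nat \<Rightarrow> nat \<Rightarrow> nat \<Rightarrow> vtx" where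
  "vtx_of i j k a b c = (let f = \<lambda>t. if t = i then a else if t = j then b else c in (f 1, f 2, f 3))"

lemma coord_vtx_of:
  assumes "{i, j, k} = {1::nat, 2, 3}"
  shows "coord i (vtx_of i j k a b c) = a" "coord j (vtx_of i j k a b c) = b"
    "coord k (vtx_of i j k a b c) = c"
  using perm3D[OF assms] by (auto simp: vtx_of_def coord_def)

lemma vtx_of_in_Kverts_iff:
  assumes "{i, j, k} = {1::nat, 2, 3}"
  shows "vtx_of i j k a b c \<in> Kverts m1 m2 m3 \<longleftrightarrow>
    (1 \<le> a \<and> a \<le> coord i (m1, m2, m3)) \<and> (1 \<le> b \<and> b \<le> coord j (m1, m2, m3)) \<and>
    (1 \<le> c \<and> c \<le> coord k (m1, m2, m3))"
  unfolding Kverts_iff perm3_Ball_Bex(1)[OF assms] coord_vtx_of[OF assms] by (rule refl)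

definition shares_coord :: "vtx \<Rightarrow> vtx \<Rightarrow> bool" where
  "shares_coord x w \<longleftrightarrow> (\<exists>t\<in>{1,2,3}. coord t x = coord t w)"

lemma Kadj_iff_not_shares_coord: "Kadj x w \<longleftrightarrow> \<not> shares_coord x w"
  by (auto simp: Kadj_def shares_coord_def)

lemma shares_coord_iff:
  assumes "{i, j, k} = {1::nat, 2, 3}"
  shows "shares_coord z w \<longleftrightarrow> coord i z = coord i w \<or> coord j z = coord j w \<or> coord k z = coord k w"
  unfolding shares_coord_def perm3_Ball_Bex(2)[OF assms] by (rule refl)

lemma shares_coord_plus1:
  "shares_coord x (a + 1, b + 1, c + 1) \<longleftrightarrow> (\<exists>t\<in>{1,2,3}. coord t x = coord t (a, b, c) + 1)"
  unfolding shares_coord_def coord_plus1 by (rule refl)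

lemma Kverts_interior:
  assumes "z \<in> Kverts a b c"
  shows "z \<in> Kverts (a + 1) (b + 1) (c + 1)" "z \<noteq> (a + 1, b + 1, c + 1)"
    "\<not> shares_coord z (a + 1, b + 1, c + 1)"
  using assms by (auto simp: Kverts_def shares_coord_def coord_def)

lemma coord_le_imp_ne_plus1:
  "t \<in> {1,2,3} \<Longrightarrow> coord t z \<le> coord t (a, b, c) \<Longrightarrow> z \<noteq> (a + 1, b + 1, c + 1)"
  using coord_plus1[of t a b c] by auto

lemma walk_0_eq: "walk V adj 0 x z \<Longrightarrow> x = z"
  by (erule walk.cases) auto

lemma walk_1_adj: "walk V adj (Suc 0) x z \<Longrightarrow> adj x z"
  by (erule walk.cases) (auto dest: walk_0_eq)

lemma gdist_eqI:
  assumes "walk V adj m x z" and "\<And>k. walk V adj k x z \<Longrightarrow> m \<le> k"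
  shows "gdist V adj x z = enat m"
  unfolding gdist_def
proof (rule antisym)
  show "Inf {enat k |k. walk V adj k x z} \<le> enat m" using assms(1) by (auto intro: Inf_lower)
  show "enat m \<le> Inf {enat k |k. walk V adj k x z}" using assms(2) by (auto intro!: Inf_greatest)
qed

lemma common_neighbour_Kverts:
  assumes "x \<in> Kverts m1 m2 m3" "y \<in> Kverts m1 m2 m3" "3 \<le> m1" "3 \<le> m2" "3 \<le> m3"
  shows "\<exists>z\<in>Kverts m1 m2 m3. Kadj x z \<and> Kadj z y"
proof -
  have avoid: "\<exists>c. 1 \<le> c \<and> c \<le> m \<and> c \<noteq> a \<and> c \<noteq> b" if "3 \<le> m" for m a b :: nat
  proof -
    have "\<exists>c\<in>{1,2,3::nat}. c \<noteq> a \<and> c \<noteq> b" by auto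
    then obtain c where "c \<in> {1,2,3::nat}" "c \<noteq> a" "c \<noteq> b" by blast
    with that show ?thesis by (intro exI[of _ c]) auto
  qed
  obtain c1 c2 c3 where "1 \<le> c1" "c1 \<le> m1" "c1 \<noteq> coord 1 x" "c1 \<noteq> coord 1 y"
    "1 \<le> c2" "c2 \<le> m2" "c2 \<noteq> coord 2 x" "c2 \<noteq> coord 2 y"
    "1 \<le> c3" "c3 \<le> m3" "c3 \<noteq> coord 3 x" "c3 \<noteq> coord 3 y"
    using avoid assms(3-5) by meson
  then show ?thesis by (intro bexI[of _ "(c1, c2, c3)"]) (auto simp: Kadj_def Kverts_def)
qed

lemma gdist_Kverts:
  assumes "x \<in> Kverts m1 m2 m3" "y \<in> Kverts m1 m2 m3" "3 \<le> m1" "3 \<le> m2" "3 \<le> m3" "x \<noteq> y"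
  shows "gdist (Kverts m1 m2 m3) Kadj x y = (if Kadj x y then 1 else 2)"
proof (cases "Kadj x y")
  case True
  have "walk (Kverts m1 m2 m3) Kadj 1 x y"
    using True assms by (auto intro!: walk.intros)
  moreover have "1 \<le> k" if "walk (Kverts m1 m2 m3) Kadj k x y" for k
    using that assms(6) by (cases k) (auto dest: walk_0_eq)
  ultimately have "gdist (Kverts m1 m2 m3) Kadj x y = enat 1" by (rule gdist_eqI)
  then show ?thesis using True by (simp add: one_enat_def)
next
  case False
  obtain z where "z \<in> Kverts m1 m2 m3" "Kadj x z" "Kadj z y"
    using common_neighbour_Kverts assms by blast
  then have "walk (Kverts m1 m2 m3) Kadj 2 x y"
    using assms by (auto simp: numeral_2_eq_2 intro!: walk.intros)
  moreover have "2 \<le> k" if "walk (Kverts m1 m2 m3) Kadj k x y" for k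
    using that assms(6) False by (cases k; cases "k - 1") (auto dest: walk_0_eq walk_1_adj)
  ultimately have "gdist (Kverts m1 m2 m3) Kadj x y = enat 2" by (rule gdist_eqI)
  then show ?thesis using False by (simp add: numeral_eq_enat)
qed

definition same_trace :: "vtx set \<Rightarrow> vtx \<Rightarrow> vtx \<Rightarrow> bool" where
  "same_trace W x y \<longleftrightarrow> (\<forall>w\<in>W. shares_coord x w \<longleftrightarrow> shares_coord y w)"

lemma same_trace_sym: "same_trace W x y \<Longrightarrow> same_trace W y x"
  by (simp add: same_trace_def)

lemma resolving_Kverts_iff:
  assumes m: "3 \<le> m1" "3 \<le> m2" "3 \<le> m3" and sub: "W \<subseteq> Kverts m1 m2 m3"
  shows "resolving (Kverts m1 m2 m3) Kadj W \<longleftrightarrow>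
    (\<forall>x\<in>Kverts m1 m2 m3 - W. \<forall>y\<in>Kverts m1 m2 m3 - W. x \<noteq> y \<longrightarrow> \<not> same_trace W x y)"
proof -
  have dist: "gdist (Kverts m1 m2 m3) Kadj x w = (if shares_coord x w then 2 else 1)"
    if "x \<in> Kverts m1 m2 m3 - W" "w \<in> W" for x w
  proof -
    have "x \<noteq> w" using that by blast
    moreover have "w \<in> Kverts m1 m2 m3" using that sub by blast
    ultimately show ?thesis
      using gdist_Kverts[of x m1 m2 m3 w] that m by (simp add: Kadj_iff_not_shares_coord)
  qed
  have "gdist (Kverts m1 m2 m3) Kadj x w \<noteq> gdist (Kverts m1 m2 m3) Kadj y w \<longleftrightarrow>
      shares_coord x w \<noteq> shares_coord y w"
    if "x \<in> Kverts m1 m2 m3 - W" "y \<in> Kverts m1 m2 m3 - W" "w \<in> W" for x y w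
    using dist[OF that(1,3)] dist[OF that(2,3)] by simp
  then show ?thesis using sub unfolding resolving_def same_trace_def by blast
qed

lemma hyperedgeI: "i \<in> {1,2,3} \<Longrightarrow> Wset W i a = e \<Longrightarrow> e \<noteq> {} \<Longrightarrow> hyperedge W i e"
  unfolding hyperedge_def by blast

lemma commonI:
  "i \<in> {1,2,3} \<Longrightarrow> w \<in> W \<Longrightarrow> v \<in> W \<Longrightarrow> coord i w = coord i v \<Longrightarrow> common W i w v"
  unfolding common_def hyperedge_def Wset_def by blast

lemma commonD: "common W i p q \<Longrightarrow> coord i q = coord i p"
  unfolding common_def hyperedge_def Wset_def by auto

lemma Wset_eq_pairD:
  assumes "Wset W i a = {p, q}"
  shows "p \<in> W" "q \<in> W" "coord i p = a" "coord i q = a"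
  using assms unfolding Wset_def by blast+

lemma hyperedge_pairD:
  assumes "hyperedge W i {p, q}" and "w \<in> W"
  shows "coord i w = coord i p \<longleftrightarrow> w = p \<or> w = q"
proof -
  obtain a where a: "Wset W i a = {p, q}" using assms(1) unfolding hyperedge_def by blast
  then have "coord i p = a" by (rule Wset_eq_pairD)
  with a assms(2) show ?thesis unfolding Wset_def by blast
qed

lemma plain_hex_of_sticks:
  assumes P: "{l, j, k} = {1, 2, 3}"
    and ne: "coord l x \<noteq> coord l y" "coord j x \<noteq> coord j y" "coord k x \<noteq> coord k y"
    and h: "Wset W l (coord l x) = {b, a}" "Wset W j (coord j y) = {a, c}" "Wset W k (coord k x) = {c, d}"
      "Wset W l (coord l y) = {d, e}" "Wset W j (coord j x) = {e, f}" "Wset W k (coord k y) = {f, b}"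
    and d: "b \<noteq> a" "a \<noteq> c" "c \<noteq> d" "d \<noteq> e" "e \<noteq> f" "f \<noteq> b"
  shows "has_plain_hex W"
  unfolding has_plain_hex_def
proof (intro exI conjI)
  note pp = perm3D[OF P]
  show "hyperedge W l {b, a}" "hyperedge W j {a, c}" "hyperedge W k {c, d}"
    "hyperedge W l {d, e}" "hyperedge W j {e, f}" "hyperedge W k {f, b}"
    using hyperedgeI[OF pp(1) h(1)] hyperedgeI[OF pp(2) h(2)] hyperedgeI[OF pp(3) h(3)]
      hyperedgeI[OF pp(1) h(4)] hyperedgeI[OF pp(2) h(5)] hyperedgeI[OF pp(3) h(6)] by simp_all
  note W = Wset_eq_pairD[OF h(1)] Wset_eq_pairD[OF h(2)] Wset_eq_pairD[OF h(3)]
    Wset_eq_pairD[OF h(4)] Wset_eq_pairD[OF h(5)] Wset_eq_pairD[OF h(6)]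
  show "distinct [b, a, c, d, e, f]" using d W ne by auto
qed (use P Wset_eq_pairD[OF h(1)] Wset_eq_pairD[OF h(3)] Wset_eq_pairD[OF h(5)] in simp_all)

lemma same_trace_plain_hex:
  assumes P: "{i, j, k} = {1, 2, 3}"
    and h12: "hyperedge W i {w1, w2}" and h45: "hyperedge W i {w4, w5}"
    and h23: "hyperedge W j {w2, w3}" and h56: "hyperedge W j {w5, w6}"
    and h34: "hyperedge W k {w3, w4}" and h61: "hyperedge W k {w6, w1}"
  shows "same_trace W (vtx_of i j k (coord i w1) (coord j w5) (coord k w3))
    (vtx_of i j k (coord i w4) (coord j w2) (coord k w6))"
  unfolding same_trace_def
proof
  fix w assume w: "w \<in> W"
  have "shares_coord (vtx_of i j k (coord i w1) (coord j w5) (coord k w3)) w \<longleftrightarrow>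
      coord i w = coord i w1 \<or> coord j w = coord j w5 \<or> coord k w = coord k w3"
    unfolding shares_coord_iff[OF P] coord_vtx_of[OF P] by auto
  also have "\<dots> \<longleftrightarrow> w \<in> {w1, w2, w3, w4, w5, w6}"
    unfolding hyperedge_pairD[OF h12 w] hyperedge_pairD[OF h56 w] hyperedge_pairD[OF h34 w] by auto
  also have "\<dots> \<longleftrightarrow> coord i w = coord i w4 \<or> coord j w = coord j w2 \<or> coord k w = coord k w6"
    unfolding hyperedge_pairD[OF h45 w] hyperedge_pairD[OF h23 w] hyperedge_pairD[OF h61 w] by auto
  also have "\<dots> \<longleftrightarrow> shares_coord (vtx_of i j k (coord i w4) (coord j w2) (coord k w6)) w"
    unfolding shares_coord_iff[OF P] coord_vtx_of[OF P] by auto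
  finally show "shares_coord (vtx_of i j k (coord i w1) (coord j w5) (coord k w3)) w \<longleftrightarrow>
      shares_coord (vtx_of i j k (coord i w4) (coord j w2) (coord k w6)) w" .
qed

definition unresolved :: "nat \<Rightarrow> nat \<Rightarrow> nat \<Rightarrow> vtx set \<Rightarrow> vtx \<Rightarrow> vtx \<Rightarrow> bool" where
  "unresolved n1 n2 n3 W x y \<longleftrightarrow>
     x \<in> Kverts (n1 + 1) (n2 + 1) (n3 + 1) - insert (n1 + 1, n2 + 1, n3 + 1) W \<and>
     y \<in> Kverts (n1 + 1) (n2 + 1) (n3 + 1) - insert (n1 + 1, n2 + 1, n3 + 1) W \<and>
     x \<noteq> y \<and> same_trace (insert (n1 + 1, n2 + 1, n3 + 1) W) x y"

lemma landmarks_subset: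
  assumes basic: "basic_landmark n1 n2 n3 W"
  shows "W \<subseteq> Kverts n1 n2 n3"
  using basic unfolding basic_landmark_def by blast

lemma landmark_coord:
  assumes basic: "basic_landmark n1 n2 n3 W"
  shows "w \<in> W \<Longrightarrow> t \<in> {1,2,3} \<Longrightarrow> 1 \<le> coord t w \<and> coord t w \<le> coord t (n1, n2, n3)"
  using subsetD[OF landmarks_subset[OF basic]] unfolding Kverts_iff by blast

lemma finite_landmarks:
  assumes basic: "basic_landmark n1 n2 n3 W"
  shows "finite W"
proof -
  have "W \<subseteq> {..n1} \<times> {..n2} \<times> {..n3}" using landmarks_subset[OF basic] by (auto simp: Kverts_def)
  then show ?thesis by (rule finite_subset) simp
qed

lemma card_Wset_ge2:
  assumes basic: "basic_landmark n1 n2 n3 W"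
  shows "i \<in> {1,2,3} \<Longrightarrow> 1 \<le> a \<Longrightarrow> a \<le> coord i (n1, n2, n3) \<Longrightarrow> 2 \<le> card (Wset W i a)"
  using basic unfolding basic_landmark_def by blast

lemma card_Wset_Int_le1:
  assumes basic: "basic_landmark n1 n2 n3 W"
  shows "i \<in> {1,2,3} \<Longrightarrow> j \<in> {1,2,3} \<Longrightarrow> i \<noteq> j \<Longrightarrow>
    card (Wset W i a \<inter> Wset W j b) \<le> 1"
  using basic unfolding basic_landmark_def by blast

lemma landmark_eqI:
  assumes basic: "basic_landmark n1 n2 n3 W"
    and "i \<in> {1,2,3}" "j \<in> {1,2,3}" "i \<noteq> j" "p \<in> W" "q \<in> W"
    and "coord i p = coord i q" "coord j p = coord j q"
  shows "p = q"
proof -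
  let ?S = "Wset W i (coord i p) \<inter> Wset W j (coord j p)"
  have "finite ?S" using finite_landmarks[OF basic] by (simp add: Wset_def)
  moreover have "card ?S \<le> 1" using card_Wset_Int_le1[OF basic] assms(2-4) by blast
  moreover have "p \<in> ?S" "q \<in> ?S" using assms(5-8) by (auto simp: Wset_def)
  ultimately show ?thesis using card_le_Suc0_iff_eq by auto
qed

lemma resolving_iff_no_unresolved:
  assumes basic: "basic_landmark n1 n2 n3 W"
    and "2 \<le> n1" "2 \<le> n2" "2 \<le> n3"
  shows "resolving (Kverts (n1 + 1) (n2 + 1) (n3 + 1)) Kadj (insert (n1 + 1, n2 + 1, n3 + 1) W) \<longleftrightarrow>
    (\<nexists>x y. unresolved n1 n2 n3 W x y)"
proof -
  have "insert (n1 + 1, n2 + 1, n3 + 1) W \<subseteq> Kverts (n1 + 1) (n2 + 1) (n3 + 1)"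
    using Kverts_interior(1) landmarks_subset[OF basic] by (auto simp: Kverts_def)
  then have "resolving (Kverts (n1 + 1) (n2 + 1) (n3 + 1)) Kadj (insert (n1 + 1, n2 + 1, n3 + 1) W) \<longleftrightarrow>
      (\<forall>x\<in>Kverts (n1 + 1) (n2 + 1) (n3 + 1) - insert (n1 + 1, n2 + 1, n3 + 1) W.
        \<forall>y\<in>Kverts (n1 + 1) (n2 + 1) (n3 + 1) - insert (n1 + 1, n2 + 1, n3 + 1) W.
          x \<noteq> y \<longrightarrow> \<not> same_trace (insert (n1 + 1, n2 + 1, n3 + 1) W) x y)"
    by (rule resolving_Kverts_iff[rotated 3]) (use assms in simp_all)
  also have "\<dots> \<longleftrightarrow> (\<nexists>x y. unresolved n1 n2 n3 W x y)" unfolding unresolved_def by blast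
  finally show ?thesis .
qed

lemma unresolvedI:
  assumes "x \<in> Kverts (n1 + 1) (n2 + 1) (n3 + 1)" "y \<in> Kverts (n1 + 1) (n2 + 1) (n3 + 1)"
    and "x \<notin> W" "y \<notin> W" "x \<noteq> y"
    and "x \<noteq> (n1 + 1, n2 + 1, n3 + 1)" "y \<noteq> (n1 + 1, n2 + 1, n3 + 1)"
    and "same_trace W x y"
    and "shares_coord x (n1 + 1, n2 + 1, n3 + 1) \<longleftrightarrow> shares_coord y (n1 + 1, n2 + 1, n3 + 1)"
  shows "unresolved n1 n2 n3 W x y"
  using assms by (auto simp: unresolved_def same_trace_def)

lemma unresolved_of_bad_4cycle:
  assumes basic: "basic_landmark n1 n2 n3 W"
    and "has_bad_4cycle W"
  shows "\<exists>x y. unresolved n1 n2 n3 W x y"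
proof -
  obtain w1 w2 w3 w4 i j k where w: "w1 \<in> W" "w2 \<in> W" "w3 \<in> W" "w4 \<in> W"
      "distinct [w1, w2, w3, w4]" and P: "{i, j, k} = {1, 2, 3}"
    and h12: "hyperedge W i {w1, w2}" and h34: "hyperedge W i {w3, w4}"
    and c23: "common W j w2 w3" and c41: "common W k w4 w1"
    using assms(2) unfolding has_bad_4cycle_def by (elim exE conjE) blast
  note pp = perm3D[OF P]
  define x where "x = vtx_of i j k (coord i w1) (coord j w2) (coord k w1)"
  define y where "y = vtx_of i j k (coord i w3) (coord j w2) (coord k w1)"
  note cx = coord_vtx_of[OF P, of "coord i w1" "coord j w2" "coord k w1", folded x_def]
  note cy = coord_vtx_of[OF P, of "coord i w3" "coord j w2" "coord k w1", folded y_def]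
  have inner: "x \<in> Kverts n1 n2 n3" "y \<in> Kverts n1 n2 n3"
    unfolding x_def y_def vtx_of_in_Kverts_iff[OF P]
    using landmark_coord[OF basic w(1) pp(1)] landmark_coord[OF basic w(3) pp(1)]
      landmark_coord[OF basic w(2) pp(2)] landmark_coord[OF basic w(1) pp(3)] by simp_all
  have i12: "coord i w2 = coord i w1" and i34: "coord i w4 = coord i w3"
    using hyperedge_pairD[OF h12 w(2)] hyperedge_pairD[OF h34 w(4)] by simp_all
  have "x \<notin> W"
  proof
    assume "x \<in> W"
    then have "x = w2" "x = w1"
      using landmark_eqI[OF basic pp(1,2,4) _ w(2)] landmark_eqI[OF basic pp(1,3,5) _ w(1)] cx i12 by simp_all
    then show False using w(5) by simp
  qed
  moreover have "y \<notin> W"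
  proof
    assume "y \<in> W"
    then have "y = w3" "y = w4"
      using landmark_eqI[OF basic pp(1,2,4) _ w(3)] landmark_eqI[OF basic pp(1,3,5) _ w(4)] cy i34
        commonD[OF c23] commonD[OF c41] by simp_all
    then show False using w(5) by simp
  qed
  moreover have "x \<noteq> y"
    using cx(1) cy(1) hyperedge_pairD[OF h12 w(3)] w(5) by auto
  moreover have "same_trace W x y"
    unfolding same_trace_def shares_coord_iff[OF P] cx cy
    using hyperedge_pairD[OF h12] hyperedge_pairD[OF h34] i12 commonD[OF c23] commonD[OF c41]
    by metis
  ultimately show ?thesis
    using unresolvedI Kverts_interior[OF inner(1)] Kverts_interior[OF inner(2)] by blast
qed

lemma unresolved_of_plain_hex:
  assumes basic: "basic_landmark n1 n2 n3 W"
    and "has_plain_hex W"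
  shows "\<exists>x y. unresolved n1 n2 n3 W x y"
proof -
  obtain w1 w2 w3 w4 w5 w6 i j k
    where w: "w1 \<in> W" "w2 \<in> W" "w3 \<in> W" "w4 \<in> W" "w5 \<in> W" "w6 \<in> W"
      "distinct [w1, w2, w3, w4, w5, w6]" and P: "{i, j, k} = {1, 2, 3}"
    and h12: "hyperedge W i {w1, w2}" and h45: "hyperedge W i {w4, w5}"
    and h23: "hyperedge W j {w2, w3}" and h56: "hyperedge W j {w5, w6}"
    and h34: "hyperedge W k {w3, w4}" and h61: "hyperedge W k {w6, w1}"
    using assms(2) unfolding has_plain_hex_def by (elim exE conjE) blast
  note pp = perm3D[OF P]
  define x where "x = vtx_of i j k (coord i w1) (coord j w5) (coord k w3)"
  define y where "y = vtx_of i j k (coord i w4) (coord j w2) (coord k w6)"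
  note cx = coord_vtx_of[OF P, of "coord i w1" "coord j w5" "coord k w3", folded x_def]
  note cy = coord_vtx_of[OF P, of "coord i w4" "coord j w2" "coord k w6", folded y_def]
  have inner: "x \<in> Kverts n1 n2 n3" "y \<in> Kverts n1 n2 n3"
    unfolding x_def y_def vtx_of_in_Kverts_iff[OF P]
    using landmark_coord[OF basic w(1) pp(1)] landmark_coord[OF basic w(5) pp(2)]
      landmark_coord[OF basic w(3) pp(3)] landmark_coord[OF basic w(4) pp(1)]
      landmark_coord[OF basic w(2) pp(2)] landmark_coord[OF basic w(6) pp(3)]
    by simp_all
  have xW: "x \<notin> W"
  proof
    assume "x \<in> W"
    then have "x = w1 \<or> x = w2" "x = w3 \<or> x = w4"
      using hyperedge_pairD[OF h12] hyperedge_pairD[OF h34] cx by simp_all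
    then show False using w(7) by auto
  qed
  have yW: "y \<notin> W"
  proof
    assume "y \<in> W"
    then have "y = w4 \<or> y = w5" "y = w6 \<or> y = w1"
      using hyperedge_pairD[OF h45] hyperedge_pairD[OF h61] cy by simp_all
    then show False using w(7) by auto
  qed
  have "x \<noteq> y"
    using cx(1) cy(1) hyperedge_pairD[OF h12 w(4)] w(7) by auto
  moreover have "same_trace W x y"
    unfolding x_def y_def by (rule same_trace_plain_hex[OF P h12 h45 h23 h56 h34 h61])
  ultimately show ?thesis
    using unresolvedI[OF _ _ xW yW] Kverts_interior[OF inner(1)] Kverts_interior[OF inner(2)] by blast
qed

lemma unresolved_of_rainbow_triangle:
  assumes basic: "basic_landmark n1 n2 n3 W"
    and "has_rainbow_triangle W"
  shows "\<exists>x y. unresolved n1 n2 n3 W x y"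
proof -
  obtain w1 w2 w3 i j k where w: "w1 \<in> W" "w2 \<in> W" "w3 \<in> W" "distinct [w1, w2, w3]"
    and P: "{i, j, k} = {1, 2, 3}"
    and h12: "hyperedge W i {w1, w2}" and h23: "hyperedge W j {w2, w3}" and c13: "common W k w1 w3"
    using assms(2) unfolding has_rainbow_triangle_def by (elim exE conjE) blast
  note pp = perm3D[OF P]
  define x where "x = vtx_of i j k (coord i w1) (coord j (n1, n2, n3) + 1) (coord k w1)"
  define y where "y = vtx_of i j k (coord i (n1, n2, n3) + 1) (coord j w2) (coord k w1)"
  note cx = coord_vtx_of[OF P, of "coord i w1" "coord j (n1, n2, n3) + 1" "coord k w1", folded x_def]
  note cy = coord_vtx_of[OF P, of "coord i (n1, n2, n3) + 1" "coord j w2" "coord k w1", folded y_def]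
  note w1i = landmark_coord[OF basic w(1) pp(1)] and w2j = landmark_coord[OF basic w(2) pp(2)]
  have "x \<in> Kverts (n1 + 1) (n2 + 1) (n3 + 1)" "y \<in> Kverts (n1 + 1) (n2 + 1) (n3 + 1)"
    unfolding x_def y_def vtx_of_in_Kverts_iff[OF P] coord_plus1
    using w1i w2j landmark_coord[OF basic w(1) pp(3)] by simp_all
  moreover have "x \<notin> W" "y \<notin> W"
    using landmark_coord[OF basic _ pp(2), of x] landmark_coord[OF basic _ pp(1), of y] cx(2) cy(1) by auto
  moreover have "x \<noteq> (n1 + 1, n2 + 1, n3 + 1)" "y \<noteq> (n1 + 1, n2 + 1, n3 + 1)"
    using coord_le_imp_ne_plus1[OF pp(1)] coord_le_imp_ne_plus1[OF pp(2)] w1i w2j cx cy by auto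
  moreover have "x \<noteq> y" using cx(1) cy(1) w1i by auto
  moreover have "shares_coord x (n1 + 1, n2 + 1, n3 + 1)" "shares_coord y (n1 + 1, n2 + 1, n3 + 1)"
    unfolding shares_coord_plus1 using pp cx cy by blast+
  moreover have "shares_coord x w \<longleftrightarrow> w = w2 \<or> coord k w = coord k w1"
    "shares_coord y w \<longleftrightarrow> w = w2 \<or> coord k w = coord k w1" if "w \<in> W" for w
    unfolding shares_coord_iff[OF P] cx cy
    using hyperedge_pairD[OF h12 that] hyperedge_pairD[OF h23 that] commonD[OF c13]
      landmark_coord[OF basic that pp(1)] landmark_coord[OF basic that pp(2)] by auto
  then have "same_trace W x y" by (simp add: same_trace_def)
  ultimately show ?thesis using unresolvedI by blast
qed

lemma stick_if_covered:
  assumes basic: "basic_landmark n1 n2 n3 W"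
    and P: "{i, j, k} = {1, 2, 3}" and a: "1 \<le> a" "a \<le> coord i (n1, n2, n3)"
    and cover: "\<And>w. w \<in> Wset W i a \<Longrightarrow> coord j w = b \<or> coord k w = c"
  obtains p q where "p \<noteq> q" "Wset W i a = {p, q}" "coord j p = b" "coord k q = c"
proof -
  note pp = perm3D[OF P]
  define A where "A = {w \<in> Wset W i a. coord j w = b}"
  define B where "B = {w \<in> Wset W i a. coord k w = c}"
  have fin: "finite (Wset W i a)" using finite_landmarks[OF basic] by (simp add: Wset_def)
  have "card A \<le> card (Wset W i a \<inter> Wset W j b)"
    by (rule card_mono) (use fin in \<open>auto simp: A_def Wset_def\<close>)
  then have A: "card A \<le> 1" using card_Wset_Int_le1[OF basic pp(1,2,4), of a b] by simp
  have "card B \<le> card (Wset W i a \<inter> Wset W k c)"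
    by (rule card_mono) (use fin in \<open>auto simp: B_def Wset_def\<close>)
  then have B: "card B \<le> 1" using card_Wset_Int_le1[OF basic pp(1,3,5), of a c] by simp
  have AB: "Wset W i a = A \<union> B" using cover by (auto simp: A_def B_def)
  have two: "2 \<le> card (A \<union> B)" using AB card_Wset_ge2[OF basic pp(1) a] by simp
  then have "card A = 1" "card B = 1" using card_Un_le[of A B] A B by simp_all
  then obtain p q where pq: "A = {p}" "B = {q}" by (meson card_1_singletonE)
  show thesis
  proof (rule that)
    show "Wset W i a = {p, q}" using AB pq by auto
    show "p \<noteq> q" using two pq by auto
    show "coord j p = b" "coord k q = c" using pq unfolding A_def B_def by blast+
  qed
qed

lemma stick_of_same_trace:
  assumes basic: "basic_landmark n1 n2 n3 W"
    and P: "{l, j, k} = {1, 2, 3}" and tw: "same_trace W x y"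
    and ne: "coord l x \<noteq> coord l y" and act: "1 \<le> coord l x" "coord l x \<le> coord l (n1, n2, n3)"
  obtains p q where "p \<noteq> q" "Wset W l (coord l x) = {p, q}"
    "coord j p = coord j y" "coord k q = coord k y"
proof -
  have "coord j w = coord j y \<or> coord k w = coord k y" if w: "w \<in> Wset W l (coord l x)" for w
  proof -
    from w have "shares_coord x w" by (auto simp: Wset_def shares_coord_iff[OF P])
    with tw w have "shares_coord y w" by (auto simp: same_trace_def Wset_def)
    with ne w show ?thesis by (auto simp: shares_coord_iff[OF P] Wset_def)
  qed
  with stick_if_covered[OF basic P act] that show thesis by blast
qed

lemma stick_through_landmark:
  assumes basic: "basic_landmark n1 n2 n3 W"
    and P: "{l, j, k} = {1, 2, 3}" and tw: "same_trace W x y" and ne: "coord l x \<noteq> coord l y"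
    and a: "a \<in> W" "coord l a = coord l x" "coord j a = coord j y"
  obtains c where "a \<noteq> c" "Wset W l (coord l x) = {a, c}" "coord k c = coord k y"
proof -
  note pp = perm3D[OF P]
  have act: "1 \<le> coord l x" "coord l x \<le> coord l (n1, n2, n3)"
    using landmark_coord[OF basic a(1) pp(1)] a(2) by simp_all
  obtain p q where pq: "p \<noteq> q" "Wset W l (coord l x) = {p, q}"
      "coord j p = coord j y" "coord k q = coord k y"
    using stick_of_same_trace[OF basic P tw ne act] .
  have "p = a" by (rule landmark_eqI[OF basic pp(1,2,4)]) (use Wset_eq_pairD[OF pq(2)] pq a in auto)
  with pq that show thesis by blast
qed

lemma bad_4cycle_of_same_trace:
  assumes basic: "basic_landmark n1 n2 n3 W"
    and P: "{l, j, k} = {1, 2, 3}" and tw: "same_trace W x y"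
    and corner: "shares_coord x (n1 + 1, n2 + 1, n3 + 1) \<longleftrightarrow> shares_coord y (n1 + 1, n2 + 1, n3 + 1)"
    and y: "y \<in> Kverts (n1 + 1) (n2 + 1) (n3 + 1)"
    and ne: "coord l x \<noteq> coord l y" and eq: "coord j x = coord j y" "coord k x = coord k y"
    and act: "1 \<le> coord l x" "coord l x \<le> coord l (n1, n2, n3)"
  shows "has_bad_4cycle W"
proof -
  note pp = perm3D[OF P]
  obtain p q where pq: "p \<noteq> q" "Wset W l (coord l x) = {p, q}"
      "coord j p = coord j y" "coord k q = coord k y"
    using stick_of_same_trace[OF basic P tw ne act] .
  note pqW = Wset_eq_pairD[OF pq(2)]
  have "\<not> shares_coord x (n1 + 1, n2 + 1, n3 + 1)"
    unfolding shares_coord_plus1 perm3_Ball_Bex(2)[OF P]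
    using act landmark_coord[OF basic pqW(1) pp(2)] landmark_coord[OF basic pqW(2) pp(3)] pq eq by auto
  with corner have "coord l y \<noteq> coord l (n1, n2, n3) + 1"
    using pp(1) unfolding shares_coord_plus1 by blast
  moreover have "1 \<le> coord l y" "coord l y \<le> coord l (n1, n2, n3) + 1"
    using y pp(1) unfolding Kverts_iff coord_plus1 by blast+
  ultimately have "coord l y \<le> coord l (n1, n2, n3)" by simp
  obtain p' q' where pq': "p' \<noteq> q'" "Wset W l (coord l y) = {p', q'}"
      "coord j p' = coord j x" "coord k q' = coord k x"
    using stick_of_same_trace[OF basic P same_trace_sym[OF tw] ne[symmetric]
      \<open>1 \<le> coord l y\<close> \<open>coord l y \<le> coord l (n1, n2, n3)\<close>] .
  note pqW' = Wset_eq_pairD[OF pq'(2)]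
  have "Wset W l (coord l x) = {q, p}" using pq(2) by (simp add: insert_commute)
  show ?thesis unfolding has_bad_4cycle_def
  proof (intro exI conjI)
    show "hyperedge W l {q, p}" by (rule hyperedgeI[OF pp(1) \<open>Wset W l (coord l x) = {q, p}\<close>]) simp
    show "hyperedge W l {p', q'}" by (rule hyperedgeI[OF pp(1) pq'(2)]) simp
    show "common W j p p'" by (rule commonI[OF pp(2) pqW(1) pqW'(1)]) (simp add: pq(3) pq'(3) eq)
    show "common W k q' q" by (rule commonI[OF pp(3) pqW'(2) pqW(2)]) (simp add: pq(4) pq'(4) eq)
    show "distinct [q, p, p', q']" using pq(1) pq'(1) pqW(3,4) pqW'(3,4) ne by auto
  qed (use P pqW pqW' in simp_all)
qed

lemma rainbow_triangle_of_same_trace: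
  assumes basic: "basic_landmark n1 n2 n3 W"
    and P: "{l, j, k} = {1, 2, 3}" and tw: "same_trace W x y"
    and ne: "coord l x \<noteq> coord l y" "coord j x \<noteq> coord j y" and eq: "coord k x = coord k y"
    and act: "1 \<le> coord l x" "coord l x \<le> coord l (n1, n2, n3)"
  shows "has_rainbow_triangle W"
proof -
  note pp = perm3D[OF P]
  obtain p q where pq: "p \<noteq> q" "Wset W l (coord l x) = {p, q}"
      "coord j p = coord j y" "coord k q = coord k y"
    using stick_of_same_trace[OF basic P tw ne(1) act] .
  note pqW = Wset_eq_pairD[OF pq(2)]
  obtain s where s: "p \<noteq> s" "Wset W j (coord j y) = {p, s}" "coord k s = coord k x"
    by (rule stick_through_landmark[OF basic perm3_commute(2)[OF P] same_trace_sym[OF tw] ne(2)[symmetric]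
      pqW(1) pq(3) pqW(3)])
  note sW = Wset_eq_pairD[OF s(2)]
  have "q \<noteq> s"
  proof
    assume "q = s"
    with pqW(3,4) sW(4) pq(3) have "q = p" by (intro landmark_eqI[OF basic pp(1,2,4) pqW(2,1)]) simp_all
    with pq(1) show False by simp
  qed
  have "Wset W l (coord l x) = {q, p}" using pq(2) by (simp add: insert_commute)
  show ?thesis unfolding has_rainbow_triangle_def
  proof (intro exI conjI)
    show "hyperedge W l {q, p}" by (rule hyperedgeI[OF pp(1) \<open>Wset W l (coord l x) = {q, p}\<close>]) simp
    show "hyperedge W j {p, s}" by (rule hyperedgeI[OF pp(2) s(2)]) simp
    show "common W k q s" by (rule commonI[OF pp(3) pqW(2) sW(2)]) (simp add: pq(4) s(3) eq)
    show "distinct [q, p, s]" using pq(1) s(1) \<open>q \<noteq> s\<close> by auto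
  qed (use P pqW sW in simp_all)
qed

lemma plain_hex_of_same_trace:
  assumes basic: "basic_landmark n1 n2 n3 W"
    and P: "{l, j, k} = {1, 2, 3}" and tw: "same_trace W x y"
    and ne: "coord l x \<noteq> coord l y" "coord j x \<noteq> coord j y" "coord k x \<noteq> coord k y"
    and act: "1 \<le> coord l x" "coord l x \<le> coord l (n1, n2, n3)"
  shows "has_plain_hex W"
proof -
  note pp = perm3D[OF P] and P' = perm3_commute[OF P]
  note tw' = same_trace_sym[OF tw]
  (* Walk around the sticks W_{l,x_l}, W_{j,y_j}, W_{k,x_k}, W_{l,y_l}, W_{j,x_j}, W_{k,y_k},
     entering each through the landmark it shares with the previous one. *)
  obtain a b where ab: "a \<noteq> b" "Wset W l (coord l x) = {a, b}"
      "coord j a = coord j y" "coord k b = coord k y"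
    using stick_of_same_trace[OF basic P tw ne(1) act] .
  note abW = Wset_eq_pairD[OF ab(2)]
  obtain c where c: "a \<noteq> c" "Wset W j (coord j y) = {a, c}" "coord k c = coord k x"
    by (rule stick_through_landmark[OF basic P'(2) tw' ne(2)[symmetric] abW(1) ab(3) abW(3)])
  note cW = Wset_eq_pairD[OF c(2)]
  obtain d where d: "c \<noteq> d" "Wset W k (coord k x) = {c, d}" "coord l d = coord l y"
    by (rule stick_through_landmark[OF basic P'(3) tw ne(3) cW(2) c(3) cW(4)])
  note dW = Wset_eq_pairD[OF d(2)]
  obtain e where e: "d \<noteq> e" "Wset W l (coord l y) = {d, e}" "coord j e = coord j x"
    by (rule stick_through_landmark[OF basic P'(1) tw' ne(1)[symmetric] dW(2) d(3) dW(4)])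
  note eW = Wset_eq_pairD[OF e(2)]
  obtain f where f: "e \<noteq> f" "Wset W j (coord j x) = {e, f}" "coord k f = coord k y"
    by (rule stick_through_landmark[OF basic P'(2) tw ne(2) eW(2) e(3) eW(4)])
  note fW = Wset_eq_pairD[OF f(2)]
  obtain b' where b': "f \<noteq> b'" "Wset W k (coord k y) = {f, b'}" "coord l b' = coord l x"
    by (rule stick_through_landmark[OF basic P'(3) tw' ne(3)[symmetric] fW(2) f(3) fW(4)])
  note b'W = Wset_eq_pairD[OF b'(2)]
  have "b' = b"
    by (rule landmark_eqI[OF basic pp(1,3,5) b'W(2) abW(2)]) (simp_all add: b'W(4) b'(3) ab(4) abW(4))
  have "Wset W l (coord l x) = {b, a}" using ab(2) by (simp add: insert_commute)
  with b' \<open>b' = b\<close> show ?thesis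
    using plain_hex_of_sticks[OF P ne _ c(2) d(2) e(2) f(2) _ ab(1)[symmetric] c(1) d(1) e(1) f(1)] by blast
qed

lemma configuration_of_same_trace:
  assumes basic: "basic_landmark n1 n2 n3 W"
    and P: "{l, j, k} = {1, 2, 3}" and tw: "same_trace W x y"
    and corner: "shares_coord x (n1 + 1, n2 + 1, n3 + 1) \<longleftrightarrow> shares_coord y (n1 + 1, n2 + 1, n3 + 1)"
    and y: "y \<in> Kverts (n1 + 1) (n2 + 1) (n3 + 1)"
    and ne: "coord l x \<noteq> coord l y" and act: "1 \<le> coord l x" "coord l x \<le> coord l (n1, n2, n3)"
  shows "has_bad_4cycle W \<or> has_plain_hex W \<or> has_rainbow_triangle W"
proof (cases "coord j x = coord j y"; cases "coord k x = coord k y")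
  assume "coord j x = coord j y" "coord k x = coord k y"
  then show ?thesis using bad_4cycle_of_same_trace[OF basic P tw corner y ne _ _ act] by blast
next
  assume "coord j x = coord j y" "coord k x \<noteq> coord k y"
  then show ?thesis using rainbow_triangle_of_same_trace[OF basic perm3_commute(1)[OF P] tw ne _ _ act] by blast
next
  assume "coord j x \<noteq> coord j y" "coord k x = coord k y"
  then show ?thesis using rainbow_triangle_of_same_trace[OF basic P tw ne _ _ act] by blast
next
  assume "coord j x \<noteq> coord j y" "coord k x \<noteq> coord k y"
  then show ?thesis using plain_hex_of_same_trace[OF basic P tw ne _ _ act] by blast
qed

lemma configuration_of_unresolved:
  assumes basic: "basic_landmark n1 n2 n3 W"
    and "unresolved n1 n2 n3 W x y"
  shows "has_bad_4cycle W \<or> has_plain_hex W \<or> has_rainbow_triangle W"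
proof -
  have x: "x \<in> Kverts (n1 + 1) (n2 + 1) (n3 + 1)" and y: "y \<in> Kverts (n1 + 1) (n2 + 1) (n3 + 1)"
    and "x \<noteq> y" and tw: "same_trace W x y"
    and corner: "shares_coord x (n1 + 1, n2 + 1, n3 + 1) \<longleftrightarrow> shares_coord y (n1 + 1, n2 + 1, n3 + 1)"
    using assms(2) by (auto simp: unresolved_def same_trace_def)
  obtain l where l: "l \<in> {1,2,3}" "coord l x \<noteq> coord l y"
    using \<open>x \<noteq> y\<close> vtx_eq_iff_coord by blast
  obtain j k where P: "{l, j, k} = {1, 2, 3}" using perm3_exists[OF l(1)] by blast
  have "1 \<le> coord l x" "coord l x \<le> coord l (n1, n2, n3) + 1"
    "1 \<le> coord l y" "coord l y \<le> coord l (n1, n2, n3) + 1"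
    using x y l(1) unfolding Kverts_iff coord_plus1 by blast+
  then consider "coord l x \<le> coord l (n1, n2, n3)" | "coord l y \<le> coord l (n1, n2, n3)"
    using l(2) by arith
  then show ?thesis
  proof cases
    case 1
    then show ?thesis
      using configuration_of_same_trace[OF basic P tw corner y l(2)] \<open>1 \<le> coord l x\<close> by blast
  next
    case 2
    then show ?thesis
      using configuration_of_same_trace[OF basic P same_trace_sym[OF tw] corner[symmetric] x l(2)[symmetric]]
        \<open>1 \<le> coord l y\<close> by blast
  qed
qed

theorem mainTheorem4:
  fixes n1 n2 n3 :: nat and W :: "vtx set"
  assumes "3 \<le> n1" and "3 \<le> n2" and "n1 \<le> n3" and "n2 \<le> n3"
    and "basic_landmark n1 n2 n3 W"
  shows "resolving (Kverts (n1 + 1) (n2 + 1) (n3 + 1)) Kadj (insert (n1 + 1, n2 + 1, n3 + 1) W)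
    \<longleftrightarrow> \<not> has_bad_4cycle W \<and> \<not> has_plain_hex W \<and> \<not> has_rainbow_triangle W"
proof -
  have "resolving (Kverts (n1 + 1) (n2 + 1) (n3 + 1)) Kadj (insert (n1 + 1, n2 + 1, n3 + 1) W)
      \<longleftrightarrow> \<not> (\<exists>x y. unresolved n1 n2 n3 W x y)"
    by (rule resolving_iff_no_unresolved[OF assms(5)]) (use assms(1-3) in simp_all)
  moreover have "(\<exists>x y. unresolved n1 n2 n3 W x y) \<longleftrightarrow>
      has_bad_4cycle W \<or> has_plain_hex W \<or> has_rainbow_triangle W"
    using configuration_of_unresolved[OF assms(5)] unresolved_of_bad_4cycle[OF assms(5)]
      unresolved_of_plain_hex[OF assms(5)] unresolved_of_rainbow_triangle[OF assms(5)] by blast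
  ultimately show ?thesis by blast
qed

end
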